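(* Let $r\ge4$. Let $\alpha>0$ be sufficiently small in terms of $r$, and let $\delta>0$ be sufficiently small in terms of $\alpha$. Let $\mathcal C$ be a nonempty collection of balanced cuts and $H$ a graph on $V=[n]$. If $H$ is rigid (with respect to $\mathcal C$), then there are distinct $(\mathcal C,H)$-components $S_1,\dots,S_{r-1}$ each of size greater than $n/r$.
   Context: A cut is an ordered partition $\Pi=(A_1,\dots,A_{r-1})$ of $V$. It is balanced if each block has size strictly between $(1-\delta)n/(r-1)$ and $(1+\delta)n/(r-1)$. $\mathrm{ext}(\Pi)$ is the set of pairs meeting two distinct blocks, and $|\Pi_H|=|H\cap\mathrm{ext}(\Pi)|$. $b(\mathcal C,H)=\max\{|\Pi_H|:\Pi\in\mathcal C\}$ and $\max(\mathcal C,H)=\{\Pi\in\mathcal C:|\Pi_H|=b(\mathcal C,H)\}$. Write $x\equiv y$ if $x$ and $y$ lie in the same block of $\Pi$ for every $\Pi\in\max(\mathcal C,H)$. The equivalence classes of $\equiv$ are the $(\mathcal C,H)$-components. $H$ is rigid if the number of unordered pairs $\{x,y\}$ ($x\ne y$) with $x\equiv y$ is at least $(1-\alpha)n^2/(2(r-1))$. *)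

theory Defs
  imports Complex_Main
begin

text \<open>A cut with r-1 blocks is a
function Pi :: nat => nat set whose blocks are Pi 0, ..., Pi (r-2); Pi i = {}
for i >= r-1 (so that cuts are determined by their blocks).\<close>

definition vset :: "nat \<Rightarrow> nat set" where
  "vset n = {1..n}"

definition is_cut :: "nat \<Rightarrow> nat \<Rightarrow> (nat \<Rightarrow> nat set) \<Rightarrow> bool" where
  "is_cut r n P \<longleftrightarrow>
     (\<forall>i<r-1. P i \<subseteq> vset n) \<and>
     (\<forall>i<r-1. \<forall>j<r-1. i \<noteq> j \<longrightarrow> P i \<inter> P j = {}) \<and>
     (\<Union>i<r-1. P i) = vset n \<and>
     (\<forall>i\<ge>r-1. P i = {})"

definition balanced :: "nat \<Rightarrow> real \<Rightarrow> nat \<Rightarrow> (nat \<Rightarrow> nat set) \<Rightarrow> bool" where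
  "balanced r \<delta> n P \<longleftrightarrow> is_cut r n P \<and>
     (\<forall>i<r-1. (1 - \<delta>) * real n / real (r-1) < real (card (P i)) \<and>
              real (card (P i)) < (1 + \<delta>) * real n / real (r-1))"

definition is_graph :: "nat \<Rightarrow> nat set set \<Rightarrow> bool" where
  "is_graph n H \<longleftrightarrow> (\<forall>e\<in>H. \<exists>x y. x \<noteq> y \<and> x \<in> vset n \<and> y \<in> vset n \<and> e = {x, y})"

definition ext :: "nat \<Rightarrow> nat \<Rightarrow> (nat \<Rightarrow> nat set) \<Rightarrow> nat set set" where
  "ext r n P = {{x, y} | x y. x \<noteq> y \<and> x \<in> vset n \<and> y \<in> vset n \<and>
       (\<exists>i<r-1. \<exists>j<r-1. i \<noteq> j \<and> x \<in> P i \<and> y \<in> P j)}"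

definition cut_size :: "nat \<Rightarrow> nat \<Rightarrow> (nat \<Rightarrow> nat set) \<Rightarrow> nat set set \<Rightarrow> nat" where
  "cut_size r n P H = card (H \<inter> ext r n P)"

definition bval :: "nat \<Rightarrow> nat \<Rightarrow> (nat \<Rightarrow> nat set) set \<Rightarrow> nat set set \<Rightarrow> nat" where
  "bval r n C H = Max ((\<lambda>P. cut_size r n P H) ` C)"

definition maxcuts :: "nat \<Rightarrow> nat \<Rightarrow> (nat \<Rightarrow> nat set) set \<Rightarrow> nat set set \<Rightarrow> (nat \<Rightarrow> nat set) set" where
  "maxcuts r n C H = {P \<in> C. cut_size r n P H = bval r n C H}"

definition cequiv :: "nat \<Rightarrow> nat \<Rightarrow> (nat \<Rightarrow> nat set) set \<Rightarrow> nat set set \<Rightarrow> nat \<Rightarrow> nat \<Rightarrow> bool" where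
  "cequiv r n C H x y \<longleftrightarrow> (\<forall>P\<in>maxcuts r n C H. \<exists>i<r-1. x \<in> P i \<and> y \<in> P i)"

definition is_component :: "nat \<Rightarrow> nat \<Rightarrow> (nat \<Rightarrow> nat set) set \<Rightarrow> nat set set \<Rightarrow> nat set \<Rightarrow> bool" where
  "is_component r n C H S \<longleftrightarrow> (\<exists>x\<in>vset n. S = {y \<in> vset n. cequiv r n C H x y})"

definition rigid :: "nat \<Rightarrow> real \<Rightarrow> nat \<Rightarrow> (nat \<Rightarrow> nat set) set \<Rightarrow> nat set set \<Rightarrow> bool" where
  "rigid r \<alpha> n C H \<longleftrightarrow>
     real (card {{x, y} | x y. x \<noteq> y \<and> x \<in> vset n \<and> y \<in> vset n \<and> cequiv r n C H x y})
       \<ge> (1 - \<alpha>) * real n ^ 2 / (2 * real (r-1))"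

end

theory Submission
  imports Defs
begin

text \<open>Fix a maximum cut \<open>P\<close> in \<open>\<C>\<close>. Every \<open>(\<C>,H)\<close>-component lies inside one block of \<open>P\<close>, so
it has fewer than \<open>(1+\<delta>)n/(r-1)\<close> vertices. Rigidity says that the sum over all vertices
\<open>x\<close> of the size of the component of \<open>x\<close> is at least \<open>(1-\<alpha>)n\<^sup>2/(r-1)\<close>. If fewer than \<open>r-1\<close>
components had more than \<open>n/r\<close> vertices, the vertices in large components would number at
most \<open>(r-2)(1+\<delta>)n/(r-1)\<close>, and the remaining vertices would each contribute at most \<open>n/r\<close>
to the sum, which then falls short of \<open>(1-\<alpha>)n\<^sup>2/(r-1)\<close> by about \<open>n\<^sup>2/((r-1)\<^sup>2 r)\<close>.\<close>

lemma card_unordered_pairs_le_sum: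
  fixes V :: "'a::linorder set"
  assumes "finite V" and sym: "\<And>x y. R x y \<Longrightarrow> R y x"
  shows "2 * card {{x, y} | x y. x \<noteq> y \<and> x \<in> V \<and> y \<in> V \<and> R x y}
           \<le> (\<Sum>x\<in>V. card {y \<in> V. R x y})"
proof -
  let ?U = "{{x, y} | x y. x \<noteq> y \<and> x \<in> V \<and> y \<in> V \<and> R x y}"
  let ?G = "Sigma V (\<lambda>x. {y \<in> V. R x y})"
  \<comment> \<open>Every pair in \<open>?U\<close> has a representative \<open>(x, y) \<in> E\<close> with \<open>x < y\<close>, and \<open>E\<close> is disjoint from its mirror image.\<close>
  define E where "E = {p \<in> ?G. fst p < snd p}"
  have finG: "finite ?G" using assms(1) by auto
  have "?U \<subseteq> (\<lambda>(x, y). {x, y}) ` E"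
  proof
    fix e assume "e \<in> ?U"
    then obtain x y where xy: "e = {x, y}" "x \<noteq> y" "x \<in> V" "y \<in> V" "R x y" by blast
    show "e \<in> (\<lambda>(x, y). {x, y}) ` E"
    proof (cases "x < y")
      case True
      with xy show ?thesis by (force simp: E_def)
    next
      case False
      with xy sym have "(y, x) \<in> E" "e = {y, x}" by (auto simp: E_def)
      then show ?thesis by force
    qed
  qed
  have finE: "finite E" using finG by (simp add: E_def)
  have "card ?U \<le> card ((\<lambda>(x, y). {x, y}) ` E)"
    using finE \<open>?U \<subseteq> _\<close> by (intro card_mono) auto
  also have "\<dots> \<le> card E" using finE by (rule card_image_le)
  finally have "card ?U \<le> card E" .
  moreover have "card ((\<lambda>(x, y). (y, x)) ` E) = card E"
    by (rule card_image) (auto simp: inj_on_def)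
  ultimately have "2 * card ?U \<le> card E + card ((\<lambda>(x, y). (y, x)) ` E)" by simp
  also have "\<dots> = card (E \<union> (\<lambda>(x, y). (y, x)) ` E)"
    using finE by (intro card_Un_disjoint[symmetric]) (auto simp: E_def)
  also have "\<dots> \<le> card ?G"
    using finG sym by (intro card_mono) (auto simp: E_def)
  also have "\<dots> = (\<Sum>x\<in>V. card {y \<in> V. R x y})"
    using assms(1) by (simp add: card_SigmaI)
  finally show ?thesis .
qed

lemma sum_le_threshold_split:
  fixes f :: "'a \<Rightarrow> real" and t M :: real
  assumes "finite V" "\<And>x. x \<in> V \<Longrightarrow> f x \<le> M"
  defines "B \<equiv> {x \<in> V. t < f x}"
  shows "(\<Sum>x\<in>V. f x) \<le> M * card B + t * card (V - B)"
proof -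
  have BV: "B \<subseteq> V" by (auto simp: B_def)
  have "(\<Sum>x\<in>V. f x) = (\<Sum>x\<in>B. f x) + (\<Sum>x\<in>V - B. f x)"
    using assms(1) BV by (metis sum.subset_diff add.commute)
  also have "\<dots> \<le> (\<Sum>x\<in>B. M) + (\<Sum>x\<in>V - B. t)"
    using BV assms(2) by (intro add_mono sum_mono) (auto simp: B_def)
  also have "\<dots> = M * card B + t * card (V - B)" by simp
  finally show ?thesis .
qed

lemma card_Union_le_card_mult:
  assumes "finite \<S>" "\<And>S. S \<in> \<S> \<Longrightarrow> real (card S) \<le> M"
  shows "real (card (\<Union>\<S>)) \<le> real (card \<S>) * M"
proof -
  have "real (card (\<Union>\<S>)) \<le> (\<Sum>S\<in>\<S>. real (card S))"
    by (metis card_Union_le_sum_card of_nat_le_iff of_nat_sum)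
  also have "\<dots> \<le> real (card \<S>) * M"
    using assms sum_mono[of \<S> "\<lambda>S. real (card S)" "\<lambda>_. M"] by simp
  finally show ?thesis .
qed

lemma inj_enumeration_from_card:
  assumes "finite A" "k \<le> card A"
  obtains S where "inj_on S {..<k}" "S ` {..<k} \<subseteq> A"
proof -
  obtain B where B: "B \<subseteq> A" "card B = k" using assms(2) by (meson obtain_subset_with_card_n)
  then have "finite B" using assms(1) finite_subset by blast
  then obtain h where "bij_betw h {0..<card B} B" using ex_bij_betw_nat_finite by blast
  with B show ?thesis by (intro that[of h]) (auto simp: bij_betw_def atLeast0LessThan)
qed

lemma small_constants_ineq:
  fixes q \<alpha> \<delta> :: real
  assumes q: "q \<ge> 3" and \<alpha>: "\<alpha> \<le> 1 / (4 * q * (q + 1))"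
    and \<delta>: "0 < \<delta>" "\<delta> \<le> 1 / (8 * (q + 1)^2)"
  shows "(q - 1) * (1 + \<delta>) * (1 + \<delta> * (q + 1)) + q^2 < (1 - \<alpha>) * q * (q + 1)"
proof -
  have "\<alpha> * (4 * q * (q + 1)) \<le> 1" using \<alpha> q by (subst (asm) le_divide_eq) auto
  then have \<alpha>_slack: "\<alpha> * q * (q + 1) \<le> 1 / 4" by (simp add: algebra_simps)
  have \<delta>8: "\<delta> * (8 * (q + 1)^2) \<le> 1" using \<delta> q by (subst (asm) le_divide_eq) auto
  have "(q + 1)^2 \<ge> 1" using q by (intro one_le_power) auto
  then have "\<delta> * 1 \<le> \<delta> * (8 * (q + 1)^2)" using \<delta> by (intro mult_left_mono) auto
  with \<delta>8 have \<delta>_small: "\<delta> \<le> 1" "2 * \<delta> * (q + 1)^2 \<le> 1 / 4" by (simp_all add: algebra_simps)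
  have "\<delta> * (q + 1) \<le> q + 1" using mult_left_le_one_le[of "q + 1" \<delta>] q \<delta> \<delta>_small by simp
  then have bracket: "(q + 2) + \<delta> * (q + 1) \<le> 2 * q + 3" by linarith
  have factor: "0 \<le> (q - 1) * \<delta>" using q \<delta> by simp
  have "(q - 1) * (1 + \<delta>) * (1 + \<delta> * (q + 1)) = (q - 1) + (q - 1) * \<delta> * ((q + 2) + \<delta> * (q + 1))"
    by algebra
  also have "\<dots> \<le> (q - 1) + (q - 1) * \<delta> * (2 * q + 3)"
    by (rule add_left_mono[OF mult_left_mono[OF bracket factor]])
  also have "\<dots> \<le> (q - 1) + 2 * \<delta> * (q + 1)^2"
  proof -
    have "2 * \<delta> * (q + 1)^2 = (q - 1) * \<delta> * (2 * q + 3) + \<delta> * (3 * q + 5)" by algebra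
    moreover have "0 \<le> \<delta> * (3 * q + 5)" using q \<delta> by simp
    ultimately show ?thesis by linarith
  qed
  finally have "(q - 1) * (1 + \<delta>) * (1 + \<delta> * (q + 1)) \<le> (q - 1) + 2 * \<delta> * (q + 1)^2" .
  moreover have "(1 - \<alpha>) * q * (q + 1) = q^2 + q - \<alpha> * q * (q + 1)" by algebra
  ultimately show ?thesis using \<alpha>_slack \<delta>_small by linarith
qed

lemma split_mass_lt_rigidity_bound:
  fixes q n \<alpha> \<delta> b :: real
  assumes q: "q \<ge> 3" and n: "n > 0" and \<alpha>: "\<alpha> \<le> 1 / (4 * q * (q + 1))"
    and \<delta>: "0 < \<delta>" "\<delta> \<le> 1 / (8 * (q + 1)^2)" and b: "b \<le> (q - 1) * ((1 + \<delta>) * n / q)"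
  shows "(1 + \<delta>) * n / q * b + n / (q + 1) * (n - b) < (1 - \<alpha>) * n^2 / q"
proof -
  define M where "M = (1 + \<delta>) * n / q"
  have "n / (q + 1) \<le> n / q" using q n by (simp add: frac_le)
  also have "\<dots> \<le> M" using q n \<delta> by (simp add: M_def divide_right_mono)
  finally have slope: "0 \<le> M - n / (q + 1)" by simp
  have "n / (q + 1) * (n - b) = n^2 / (q + 1) - n / (q + 1) * b"
    by (simp add: right_diff_distrib power2_eq_square)
  then have "M * b + n / (q + 1) * (n - b) = (M - n / (q + 1)) * b + n^2 / (q + 1)"
    by (simp add: left_diff_distrib)
  also have "\<dots> \<le> (M - n / (q + 1)) * ((q - 1) * M) + n^2 / (q + 1)"
    using mult_left_mono[OF b[folded M_def] slope] by simp
  also have "\<dots> = n^2 * ((q - 1) * (1 + \<delta>) * (1 + \<delta> * (q + 1)) + q^2) / (q^2 * (q + 1))"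
  proof -
    have q0: "q \<noteq> 0" "q + 1 \<noteq> 0" using q by auto
    have "M - n / (q + 1) = n * (1 + \<delta> * (q + 1)) / (q * (q + 1))"
      using q0 by (simp add: M_def field_simps)
    moreover have "n * (1 + \<delta> * (q + 1)) / (q * (q + 1)) * ((q - 1) * M) + n^2 / (q + 1)
        = n^2 * ((q - 1) * (1 + \<delta>) * (1 + \<delta> * (q + 1)) + q^2) / (q^2 * (q + 1))"
      using q0 by (simp add: M_def divide_simps) (simp add: algebra_simps power2_eq_square)
    ultimately show ?thesis by simp
  qed
  also have "\<dots> < n^2 * ((1 - \<alpha>) * q * (q + 1)) / (q^2 * (q + 1))"
    using small_constants_ineq[OF q \<alpha> \<delta>] n q by (intro divide_strict_right_mono mult_strict_left_mono) auto
  also have "\<dots> = (1 - \<alpha>) * n^2 / q"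
    using q by (simp add: divide_simps) (simp add: algebra_simps power2_eq_square)
  finally show ?thesis by (simp add: M_def)
qed

definition component :: "nat \<Rightarrow> nat \<Rightarrow> (nat \<Rightarrow> nat set) set \<Rightarrow> nat set set \<Rightarrow> nat \<Rightarrow> nat set" where
  "component r n C H x = {y \<in> vset n. cequiv r n C H x y}"

lemma is_component_iff: "is_component r n C H S \<longleftrightarrow> (\<exists>x\<in>vset n. S = component r n C H x)"
  by (simp add: is_component_def component_def)

lemma finite_vset [simp]: "finite (vset n)" and card_vset [simp]: "card (vset n) = n"
  by (simp_all add: vset_def)

lemma finite_components: "finite {S. is_component r n C H S}"
  by (rule finite_subset[of _ "Pow (vset n)"]) (auto simp: is_component_iff component_def)

lemma cut_block_exists:
  assumes "is_cut r n P" "x \<in> vset n"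
  obtains i where "i < r - 1" "x \<in> P i"
  using assms unfolding is_cut_def by blast

lemma cut_block_unique:
  assumes "is_cut r n P" "i < r - 1" "j < r - 1" "x \<in> P i" "x \<in> P j"
  shows "i = j"
  using assms unfolding is_cut_def by blast

lemma balanced_imp_pos:
  assumes "balanced r \<delta> n P" "2 \<le> r"
  shows "0 < n"
proof (rule ccontr)
  assume "\<not> 0 < n"
  have "0 < r - 1" using assms(2) by simp
  then have "(1 - \<delta>) * real n / real (r - 1) < real (card (P 0))"
    and "real (card (P 0)) < (1 + \<delta>) * real n / real (r - 1)"
    using assms(1) unfolding balanced_def by blast+
  with \<open>\<not> 0 < n\<close> show False by simp
qed

lemma cut_size_le: "cut_size r n P H \<le> 2 ^ n"
proof -
  have "H \<inter> ext r n P \<subseteq> Pow (vset n)" by (auto simp: ext_def)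
  then have "card (H \<inter> ext r n P) \<le> card (Pow (vset n))" by (rule card_mono[rotated]) simp
  then show ?thesis by (simp add: cut_size_def card_Pow)
qed

lemma maxcuts_nonempty:
  assumes "C \<noteq> {}"
  shows "maxcuts r n C H \<noteq> {}"
proof -
  have "finite ((\<lambda>P. cut_size r n P H) ` C)"
    by (intro finite_subset[OF _ finite_atMost[of "2 ^ n"]] image_subsetI) (simp add: cut_size_le)
  then have "bval r n C H \<in> (\<lambda>P. cut_size r n P H) ` C"
    unfolding bval_def using assms by (intro Max_in) auto
  then show ?thesis by (auto simp: maxcuts_def)
qed

lemma cequiv_refl:
  assumes "\<forall>P\<in>C. is_cut r n P" "x \<in> vset n"
  shows "cequiv r n C H x x"
  unfolding cequiv_def
proof
  fix P assume "P \<in> maxcuts r n C H"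
  then have "is_cut r n P" using assms(1) by (simp add: maxcuts_def)
  then obtain i where "i < r - 1" "x \<in> P i" using assms(2) by (rule cut_block_exists)
  then show "\<exists>i<r - 1. x \<in> P i \<and> x \<in> P i" by blast
qed

lemma cequiv_sym: "cequiv r n C H x y \<Longrightarrow> cequiv r n C H y x"
  by (auto simp: cequiv_def)

lemma component_subset_block:
  assumes "P \<in> maxcuts r n C H" "is_cut r n P" "i < r - 1" "x \<in> P i"
  shows "component r n C H x \<subseteq> P i"
proof
  fix y assume "y \<in> component r n C H x"
  then obtain j where "j < r - 1" "x \<in> P j" "y \<in> P j"
    using assms(1) by (auto simp: component_def cequiv_def)
  with assms show "y \<in> P i" using cut_block_unique by blast
qed

lemma card_component_less:
  assumes "C \<noteq> {}" "\<forall>P\<in>C. balanced r \<delta> n P" "x \<in> vset n"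
  shows "real (card (component r n C H x)) < (1 + \<delta>) * real n / real (r - 1)"
proof -
  obtain P where P: "P \<in> maxcuts r n C H"
    using maxcuts_nonempty[OF assms(1)] by blast
  then have bal: "balanced r \<delta> n P" using assms(2) by (auto simp: maxcuts_def)
  then have cut: "is_cut r n P" by (simp add: balanced_def)
  obtain i where i: "i < r - 1" "x \<in> P i" using cut assms(3) by (rule cut_block_exists)
  have "finite (P i)"
    using cut i by (intro finite_subset[OF _ finite_vset[of n]]) (auto simp: is_cut_def)
  then have "card (component r n C H x) \<le> card (P i)"
    using component_subset_block[OF P cut i] by (rule card_mono)
  moreover have "real (card (P i)) < (1 + \<delta>) * real n / real (r - 1)"
    using bal i by (simp add: balanced_def)
  ultimately show ?thesis by (meson of_nat_le_iff order_le_less_trans)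
qed

lemma card_big_vertices_le:
  assumes "C \<noteq> {}" "\<forall>P\<in>C. balanced r \<delta> n P"
  shows "real (card {x \<in> vset n. t < real (card (component r n C H x))})
           \<le> real (card {S. is_component r n C H S \<and> t < real (card S)})
               * ((1 + \<delta>) * real n / real (r - 1))"
proof -
  let ?B = "{x \<in> vset n. t < real (card (component r n C H x))}"
  let ?\<S> = "{S. is_component r n C H S \<and> t < real (card S)}"
  have cuts: "\<forall>P\<in>C. is_cut r n P" using assms(2) by (simp add: balanced_def)
  have "?B \<subseteq> \<Union>?\<S>"
  proof
    fix x assume x: "x \<in> ?B"
    then have "component r n C H x \<in> ?\<S>" by (auto simp: is_component_iff)
    moreover have "x \<in> component r n C H x"
      using x cequiv_refl[OF cuts] by (simp add: component_def)
    ultimately show "x \<in> \<Union>?\<S>" by blast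
  qed
  moreover have "finite (\<Union>?\<S>)"
    by (rule finite_subset[of _ "vset n"]) (auto simp: is_component_iff component_def)
  ultimately have "real (card ?B) \<le> real (card (\<Union>?\<S>))" by (simp add: card_mono)
  also have "\<dots> \<le> real (card ?\<S>) * ((1 + \<delta>) * real n / real (r - 1))"
    using finite_subset[OF _ finite_components] card_component_less[OF assms]
    by (intro card_Union_le_card_mult) (auto simp: is_component_iff less_imp_le)
  finally show ?thesis .
qed

lemma sum_card_component_ge_of_rigid:
  assumes "rigid r \<alpha> n C H"
  shows "(1 - \<alpha>) * real n ^ 2 / real (r - 1) \<le> (\<Sum>x\<in>vset n. real (card (component r n C H x)))"
proof -
  let ?U = "{{x, y} | x y. x \<noteq> y \<and> x \<in> vset n \<and> y \<in> vset n \<and> cequiv r n C H x y}"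
  have "2 * card ?U \<le> (\<Sum>x\<in>vset n. card (component r n C H x))"
    unfolding component_def by (rule card_unordered_pairs_le_sum) (simp_all add: cequiv_sym)
  then have "real (2 * card ?U) \<le> real (\<Sum>x\<in>vset n. card (component r n C H x))"
    by (rule of_nat_mono)
  then have "2 * real (card ?U) \<le> (\<Sum>x\<in>vset n. real (card (component r n C H x)))"
    by simp
  moreover have "(1 - \<alpha>) * real n ^ 2 / real (r - 1) = 2 * ((1 - \<alpha>) * real n ^ 2 / (2 * real (r - 1)))"
    by simp
  ultimately show ?thesis using assms by (simp add: rigid_def)
qed

lemma rigid_imp_many_big_components:
  assumes r: "r \<ge> 4" and \<alpha>: "\<alpha> \<le> 1 / (4 * real (r - 1) * real r)"
    and \<delta>: "0 < \<delta>" "\<delta> \<le> 1 / (8 * real r ^ 2)"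
    and C: "C \<noteq> {}" "\<forall>P\<in>C. balanced r \<delta> n P" and rigid: "rigid r \<alpha> n C H"
  shows "r - 1 \<le> card {S. is_component r n C H S \<and> real n / real r < real (card S)}"
proof (rule ccontr)
  define q where "q = real (r - 1)"
  let ?M = "(1 + \<delta>) * real n / q"
  define B where "B = {x \<in> vset n. real n / real r < real (card (component r n C H x))}"
  let ?s = "\<Sum>x\<in>vset n. real (card (component r n C H x))"
  assume "\<not> r - 1 \<le> card {S. is_component r n C H S \<and> real n / real r < real (card S)}"
  then have few: "real (card {S. is_component r n C H S \<and> real n / real r < real (card S)}) \<le> q - 1"
    using r by (simp add: q_def of_nat_diff)
  have q: "q \<ge> 3" "real r = q + 1" using r by (simp_all add: q_def of_nat_diff)
  obtain P where "P \<in> C" using C(1) by blast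
  with C(2) have "balanced r \<delta> n P" by blast
  then have n: "0 < real n" using r by (simp add: balanced_imp_pos)
  have "real (card B) \<le> real (card {S. is_component r n C H S \<and> real n / real r < real (card S)}) * ?M"
    using card_big_vertices_le[OF C, of "real n / real r" H] by (simp add: B_def q_def)
  also have "\<dots> \<le> (q - 1) * ?M"
    using few \<delta>(1) by (intro mult_right_mono) (simp_all add: q_def)
  finally have b: "real (card B) \<le> (q - 1) * ?M" .
  have \<alpha>': "\<alpha> \<le> 1 / (4 * q * (q + 1))" and \<delta>': "\<delta> \<le> 1 / (8 * (q + 1)^2)"
    using \<alpha> \<delta>(2) unfolding q(2)[symmetric] unfolding q_def .
  have "?M * card B + real n / (q + 1) * (real n - card B) < (1 - \<alpha>) * real n ^ 2 / q"
    using split_mass_lt_rigidity_bound[OF q(1) n \<alpha>' \<delta>(1) \<delta>' b] .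
  moreover have "?s \<le> ?M * card B + real n / real r * card (vset n - B)"
  proof -
    have "real (card (component r n C H x)) \<le> ?M" if "x \<in> vset n" for x
      using less_imp_le[OF card_component_less[OF C that]] unfolding q_def .
    then show ?thesis unfolding B_def by (rule sum_le_threshold_split[OF finite_vset])
  qed
  moreover have "real (card (vset n - B)) = real n - card B"
  proof -
    have "B \<subseteq> vset n" by (auto simp: B_def)
    moreover from this have "card B \<le> n" using card_mono[OF finite_vset] by fastforce
    ultimately show ?thesis by (simp add: card_Diff_subset finite_subset of_nat_diff)
  qed
  moreover have "(1 - \<alpha>) * real n ^ 2 / q \<le> ?s"
    using sum_card_component_ge_of_rigid[OF rigid] by (simp add: q_def)
  ultimately show False using q by simp
qed

theorem mainTheorem15:
  fixes r :: nat
  assumes "r \<ge> 4"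
  shows "\<exists>\<alpha>0>0. \<forall>\<alpha>. 0 < \<alpha> \<and> \<alpha> \<le> \<alpha>0 \<longrightarrow>
           (\<exists>\<delta>0>0. \<forall>\<delta>. 0 < \<delta> \<and> \<delta> \<le> \<delta>0 \<longrightarrow>
             (\<forall>n C H. C \<noteq> {} \<and> (\<forall>P\<in>C. balanced r \<delta> n P) \<and> is_graph n H \<and>
                 rigid r \<alpha> n C H \<longrightarrow>
                 (\<exists>S :: nat \<Rightarrow> nat set. inj_on S {..<r-1} \<and>
                    (\<forall>i<r-1. is_component r n C H (S i) \<and> real (card (S i)) > real n / real r))))"
proof -
  have big_components:
    "\<exists>S :: nat \<Rightarrow> nat set. inj_on S {..<r-1} \<and>
       (\<forall>i<r-1. is_component r n C H (S i) \<and> real (card (S i)) > real n / real r)"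
    if "\<alpha> \<le> 1 / (4 * real (r - 1) * real r)" "0 < \<delta>" "\<delta> \<le> 1 / (8 * real r ^ 2)"
      "C \<noteq> {}" "\<forall>P\<in>C. balanced r \<delta> n P" "rigid r \<alpha> n C H" for \<alpha> \<delta> n C H
  proof -
    let ?\<S> = "{S. is_component r n C H S \<and> real n / real r < real (card S)}"
    have "finite ?\<S>" by (rule finite_subset[OF _ finite_components]) blast
    moreover have "r - 1 \<le> card ?\<S>" by (rule rigid_imp_many_big_components[OF assms that])
    ultimately obtain S where "inj_on S {..<r - 1}" "S ` {..<r - 1} \<subseteq> ?\<S>"
      by (rule inj_enumeration_from_card)
    then show ?thesis by blast
  qed
  moreover have "0 < 1 / (4 * real (r - 1) * real r)" "0 < 1 / (8 * real r ^ 2)"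
    using assms by auto
  ultimately show ?thesis by blast
qed

end
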